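(* Let $N\ge 2$, let $\rho$ be a density matrix on $\mathbb{C}^N$ and let $n\ge 1$ be an integer. Then $\mathcal{C}(\rho^{\otimes n})\le n\,\mathcal{C}(\rho)$, where $\mathcal{C}(\rho^{\otimes n})$ is computed on the $N^n$-dimensional space $(\mathbb{C}^N)^{\otimes n}$ (so with reference state $\mathbb{I}/N^n=\mathcal{I}^{\otimes n}$ and normalization $1/\log_2(N^n)$).
   Context: For a density matrix $\rho$ (positive semidefinite, trace one) on an $N$-dimensional Hilbert space $\mathcal{H}_N$, $N\ge 2$, let $\mathcal{I}=\mathbb{I}/N$ denote the normalized maximally mixed state. The von Neumann entropy is $S(\rho)=-\mathrm{Tr}[\rho\log_2\rho]$ (with $0\log 0=0$), and the trace distance to $\mathcal{I}$ is $D(\rho,\mathcal{I})=\tfrac12\mathrm{Tr}\sqrt{(\rho-\mathcal{I})^2}=\tfrac12\|\rho-\mathcal{I}\|_1$. The Quantum Statistical Complexity Measure (QSCM) is $\mathcal{C}(\rho)=\frac{1}{\log_2 N}\,S(\rho)\,D(\rho,\mathcal{I})$, where $N$ is the dimension of the space on which $\rho$ acts. *)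

theory Defs
  imports "Jordan_Normal_Form.Char_Poly" "HOL-Computational_Algebra.Polynomial" "HOL-Library.Multiset"
begin

definition kron_mat :: "complex mat \<Rightarrow> complex mat \<Rightarrow> complex mat" where
  "kron_mat A B = mat (dim_row A * dim_row B) (dim_col A * dim_col B)
     (\<lambda>(i,j). A $$ (i div dim_row B, j div dim_col B) * B $$ (i mod dim_row B, j mod dim_col B))"

fun tensor_pow :: "complex mat \<Rightarrow> nat \<Rightarrow> complex mat" where
  "tensor_pow A 0 = 1\<^sub>m 1"
| "tensor_pow A (Suc n) = kron_mat (tensor_pow A n) A"

(* density matrix on C^N: N x N, positive semidefinite (<v, rho v> real and >= 0 for all v), trace one *)
definition density_matrix :: "nat \<Rightarrow> complex mat \<Rightarrow> bool" where
  "density_matrix N \<rho> \<longleftrightarrow> \<rho> \<in> carrier_mat N N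
     \<and> (\<forall>v \<in> carrier_vec N.
          (let q = (\<Sum>i<N. \<Sum>j<N. cnj (v $ i) * \<rho> $$ (i,j) * v $ j) in Im q = 0 \<and> Re q \<ge> 0))
     \<and> (\<Sum>i<N. \<rho> $$ (i,i)) = 1"

definition eigvals_mset :: "complex mat \<Rightarrow> complex multiset" where
  "eigvals_mset A = proots (char_poly A)"

definition entr :: "real \<Rightarrow> real" where
  "entr x = (if x = 0 then 0 else x * log 2 x)"

(* von Neumann entropy  S(rho) = - Tr[rho log2 rho] = - sum over eigenvalues of  l log2 l *)
definition vn_entropy :: "complex mat \<Rightarrow> real" where
  "vn_entropy \<rho> = - (\<Sum>\<^sub># (image_mset (\<lambda>l. entr (Re l)) (eigvals_mset \<rho>)))"

(* trace distance  (1/2) Tr sqrt((A-B)^2) = (1/2) sum of |eigenvalues| of the Hermitian A - B *)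
definition trace_dist :: "complex mat \<Rightarrow> complex mat \<Rightarrow> real" where
  "trace_dist A B = (1/2) * (\<Sum>\<^sub># (image_mset (\<lambda>l. \<bar>Re l\<bar>) (eigvals_mset (A - B))))"

definition max_mixed :: "nat \<Rightarrow> complex mat" where
  "max_mixed N = (1 / of_nat N) \<cdot>\<^sub>m 1\<^sub>m N"

definition qscm :: "complex mat \<Rightarrow> real" where
  "qscm \<rho> = (1 / log 2 (real (dim_row \<rho>))) * vn_entropy \<rho>
              * trace_dist \<rho> (max_mixed (dim_row \<rho>))"

end

theory Submission
  imports Defs "Jordan_Normal_Form.Schur_Decomposition"
begin

text \<open>
  By Schur triangularization \<rho> is similar to an upper triangular matrix whose diagonal is its
  spectrum, and Kronecker products of such similarities are again such similarities. So the
  spectrum of \<rho>^\<otimes>n consists of the n-fold products of eigenvalues of \<rho>, and subtracting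
  \<I>^\<otimes>n = N^-n \<cdot> 1 shifts it by N^-n. For the spectrum p of \<rho>, a probability vector, and the
  uniform vector u, the entropy is additive, H(p^\<otimes>n) = n H(p), while
  \<bar>xy - cd\<bar> \<le> x \<bar>y - d\<bar> + d \<bar>x - c\<bar> gives \<parallel>p^\<otimes>n - u^\<otimes>n\<parallel>_1 \<le> n \<parallel>p - u\<parallel>_1 by induction.
  The factor n of the entropy cancels against log_2 N^n = n log_2 N, leaving the factor n of
  the distance.
\<close>

lemma sum_lessThan_mult:
  fixes g :: "nat \<Rightarrow> 'a::comm_monoid_add"
  shows "(\<Sum>r<k * l. g r) = (\<Sum>p<k. \<Sum>q<l. g (p * l + q))"
proof -
  have "(\<Sum>r<k * l. g r) = (\<Sum>p<k. sum g {p * l..<p * l + l})"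
    using sum.nat_group[of g l k] by (simp add: mult.commute)
  also have "\<dots> = (\<Sum>p<k. \<Sum>q<l. g (p * l + q))"
  proof (rule sum.cong[OF refl])
    fix p
    have "sum g {p * l..<p * l + l} = (\<Sum>q = 0..<l. g (q + p * l))"
      using sum.shift_bounds_nat_ivl[of g 0 "p * l" l] by (simp add: add.commute)
    then show "sum g {p * l..<p * l + l} = (\<Sum>q<l. g (p * l + q))"
      by (simp add: atLeast0LessThan add.commute)
  qed
  finally show ?thesis .
qed

lemma div_mod_mult_less:
  fixes i a b :: nat
  assumes "i < a * b"
  shows "i div b < a" "i mod b < b"
proof -
  have "b > 0" using assms by (cases b) auto
  then show "i div b < a" "i mod b < b" using assms by (auto simp: less_mult_imp_div_less)
qed

section \<open>Kronecker products of lists\<close>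

definition kron_list :: "'a::times list \<Rightarrow> 'a list \<Rightarrow> 'a list" where
  "kron_list xs ys = map (\<lambda>i. xs ! (i div length ys) * ys ! (i mod length ys)) [0..<length xs * length ys]"

lemma length_kron_list [simp]: "length (kron_list xs ys) = length xs * length ys"
  by (simp add: kron_list_def)

lemma sum_list_map_kron_list:
  fixes g :: "'a::times \<Rightarrow> 'b::comm_monoid_add"
  shows "sum_list (map g (kron_list xs ys)) = (\<Sum>x\<leftarrow>xs. \<Sum>y\<leftarrow>ys. g (x * y))"
proof -
  let ?m = "length ys"
  have "sum_list (map g (kron_list xs ys)) = (\<Sum>i<length xs * ?m. g (xs ! (i div ?m) * ys ! (i mod ?m)))"
    by (simp add: kron_list_def sum_list_sum_nth atLeast0LessThan)
  also have "\<dots> = (\<Sum>p<length xs. \<Sum>q<?m. g (xs ! p * ys ! q))"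
    unfolding sum_lessThan_mult
  proof (intro sum.cong refl)
    fix p q assume q: "q \<in> {..<?m}"
    then have "?m > 0" by auto
    with q have "(p * ?m + q) div ?m = p" "(p * ?m + q) mod ?m = q" by auto
    then show "g (xs ! ((p * ?m + q) div ?m) * ys ! ((p * ?m + q) mod ?m)) = g (xs ! p * ys ! q)"
      by simp
  qed
  also have "\<dots> = (\<Sum>x\<leftarrow>xs. \<Sum>y\<leftarrow>ys. g (x * y))"
    by (simp add: sum_list_sum_nth atLeast0LessThan)
  finally show ?thesis .
qed

lemma sum_list_kron_list: "sum_list (kron_list xs ys) = sum_list xs * (sum_list ys :: 'a::comm_semiring_1)"
  using sum_list_map_kron_list[of "\<lambda>z. z" xs ys]
  by (simp add: sum_list_const_mult sum_list_mult_const)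

lemma map_of_real_kron_list:
  "map of_real (kron_list xs ys) = kron_list (map of_real xs) (map (of_real :: real \<Rightarrow> 'a::real_algebra_1) ys)"
  by (auto simp: kron_list_def div_mod_mult_less)

lemma set_kron_list:
  assumes "z \<in> set (kron_list xs ys)"
  shows "\<exists>x\<in>set xs. \<exists>y\<in>set ys. z = x * y"
proof -
  obtain i where i: "i < length xs * length ys"
    and z: "z = xs ! (i div length ys) * ys ! (i mod length ys)"
    using assms by (auto simp: kron_list_def)
  show ?thesis
    using z nth_mem div_mod_mult_less[OF i] by blast
qed

fun kron_list_pow :: "'a::monoid_mult list \<Rightarrow> nat \<Rightarrow> 'a list" where
  "kron_list_pow xs 0 = [1]"
| "kron_list_pow xs (Suc n) = kron_list (kron_list_pow xs n) xs"

lemma length_kron_list_pow [simp]: "length (kron_list_pow xs n) = length xs ^ n"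
  by (induction n) auto

lemma map_of_real_kron_list_pow:
  "map of_real (kron_list_pow xs n) = kron_list_pow (map (of_real :: real \<Rightarrow> 'a::real_algebra_1) xs) n"
  by (induction n) (auto simp: map_of_real_kron_list)

section \<open>Kronecker products of matrices\<close>

lemma dim_kron_mat [simp]:
  "dim_row (kron_mat A B) = dim_row A * dim_row B"
  "dim_col (kron_mat A B) = dim_col A * dim_col B"
  by (simp_all add: kron_mat_def)

lemma kron_mat_mult:
  assumes A: "A \<in> carrier_mat a k" and B: "B \<in> carrier_mat k b"
    and C: "C \<in> carrier_mat c l" and D: "D \<in> carrier_mat l e"
  shows "kron_mat (A * B) (C * D) = kron_mat A C * kron_mat B D"
proof (rule eq_matI)
  fix i j assume "i < dim_row (kron_mat A C * kron_mat B D)" "j < dim_col (kron_mat A C * kron_mat B D)"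
  then have i: "i < a * c" and j: "j < b * e" using A B C D by auto
  note ij = div_mod_mult_less[OF i] div_mod_mult_less[OF j]
  have "kron_mat (A * B) (C * D) $$ (i, j)
      = (\<Sum>p<k. A $$ (i div c, p) * B $$ (p, j div e)) * (\<Sum>q<l. C $$ (i mod c, q) * D $$ (q, j mod e))"
    using A B C D i j ij by (simp add: kron_mat_def scalar_prod_def atLeast0LessThan)
  also have "\<dots> = (\<Sum>p<k. \<Sum>q<l. (A $$ (i div c, p) * C $$ (i mod c, q)) * (B $$ (p, j div e) * D $$ (q, j mod e)))"
    by (simp add: sum_product algebra_simps)
  also have "\<dots> = (\<Sum>r<k * l. kron_mat A C $$ (i, r) * kron_mat B D $$ (r, j))"
    unfolding sum_lessThan_mult
  proof (intro sum.cong refl)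
    fix p q assume "p \<in> {..<k}" "q \<in> {..<l}"
    then have "p * l + q < k * l" "(p * l + q) div l = p" "(p * l + q) mod l = q"
      by (auto intro: less_le_trans[OF _ mult_le_mono1[of "Suc p" k l]])
    then show "A $$ (i div c, p) * C $$ (i mod c, q) * (B $$ (p, j div e) * D $$ (q, j mod e)) =
         kron_mat A C $$ (i, p * l + q) * kron_mat B D $$ (p * l + q, j)"
      using A B C D i j by (simp add: kron_mat_def)
  qed
  also have "\<dots> = (kron_mat A C * kron_mat B D) $$ (i, j)"
    using A B C D i j by (simp add: scalar_prod_def atLeast0LessThan)
  finally show "kron_mat (A * B) (C * D) $$ (i, j) = (kron_mat A C * kron_mat B D) $$ (i, j)" .
qed (use A B C D in auto)

lemma kron_mat_one: "kron_mat (1\<^sub>m a) (1\<^sub>m b) = 1\<^sub>m (a * b)"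
proof (rule eq_matI)
  fix i j assume "i < dim_row (1\<^sub>m (a * b))" "j < dim_col (1\<^sub>m (a * b))"
  then have i: "i < a * b" and j: "j < a * b" by auto
  have "(i div b = j div b \<and> i mod b = j mod b) = (i = j)"
    by (metis div_mult_mod_eq)
  then show "kron_mat (1\<^sub>m a) (1\<^sub>m b) $$ (i, j) = 1\<^sub>m (a * b) $$ (i, j)"
    using i j div_mod_mult_less[OF i] div_mod_mult_less[OF j] by (auto simp: kron_mat_def)
qed auto

lemma upper_triangular_kron_mat:
  assumes A: "A \<in> carrier_mat a a" "upper_triangular A"
    and B: "B \<in> carrier_mat b b" "upper_triangular B"
  shows "upper_triangular (kron_mat A B)"
proof
  fix i j assume "i < dim_row (kron_mat A B)" and ji: "j < i"
  then have i: "i < a * b" using A B by simp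
  show "kron_mat A B $$ (i, j) = 0"
  proof (cases "j div b < i div b")
    case True
    then have "A $$ (i div b, j div b) = 0" using A div_mod_mult_less[OF i] by auto
    then show ?thesis using i ji A B by (simp add: kron_mat_def)
  next
    case False
    then have "j div b = i div b" using ji by (simp add: div_le_mono le_antisym)
    then have "j mod b < i mod b" using ji by (metis div_mult_mod_eq nat_add_left_cancel_less)
    then have "B $$ (i mod b, j mod b) = 0" using B div_mod_mult_less[OF i] by auto
    then show ?thesis using i ji A B by (simp add: kron_mat_def)
  qed
qed

lemma diag_mat_kron_mat:
  assumes A: "A \<in> carrier_mat a a" and B: "B \<in> carrier_mat b b"
  shows "diag_mat (kron_mat A B) = kron_list (diag_mat A) (diag_mat B)"
proof (rule nth_equalityI)
  fix i assume "i < length (diag_mat (kron_mat A B))"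
  then have i: "i < a * b" using A B by (simp add: diag_mat_def)
  then show "diag_mat (kron_mat A B) ! i = kron_list (diag_mat A) (diag_mat B) ! i"
    using A B div_mod_mult_less[OF i] by (simp add: kron_list_def diag_mat_def kron_mat_def)
qed (use A B in \<open>simp add: diag_mat_def\<close>)

lemma similar_mat_wit_kron_mat:
  assumes "similar_mat_wit A S P Q" "similar_mat_wit B T P' Q'"
  shows "similar_mat_wit (kron_mat A B) (kron_mat S T) (kron_mat P P') (kron_mat Q Q')"
proof -
  define a b where "a = dim_row A" and "b = dim_row B"
  note A = similar_mat_witD[OF a_def assms(1)] and B = similar_mat_witD[OF b_def assms(2)]
  have "kron_mat P P' * kron_mat Q Q' = kron_mat (P * Q) (P' * Q')"
    using kron_mat_mult[OF A(6,7) B(6,7)] by simp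
  then have PQ: "kron_mat P P' * kron_mat Q Q' = 1\<^sub>m (a * b)"
    by (simp add: A(1) B(1) kron_mat_one)
  have "kron_mat Q Q' * kron_mat P P' = kron_mat (Q * P) (Q' * P')"
    using kron_mat_mult[OF A(7,6) B(7,6)] by simp
  then have QP: "kron_mat Q Q' * kron_mat P P' = 1\<^sub>m (a * b)"
    by (simp add: A(2) B(2) kron_mat_one)
  have "kron_mat A B = kron_mat (P * S) (P' * T) * kron_mat Q Q'"
    unfolding A(3) B(3)
    by (rule kron_mat_mult[OF mult_carrier_mat[OF A(6,5)] A(7) mult_carrier_mat[OF B(6,5)] B(7)])
  also have "\<dots> = kron_mat P P' * kron_mat S T * kron_mat Q Q'"
    by (simp add: kron_mat_mult[OF A(6,5) B(6,5)])
  finally show ?thesis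
    using PQ QP A(4-7) B(4-7) by (intro similar_mat_witI[of _ _ "a * b"]) auto
qed

section \<open>Spectra via triangularization\<close>

definition similar_upper_triangular :: "complex mat \<Rightarrow> complex list \<Rightarrow> bool" where
  "similar_upper_triangular M ds \<longleftrightarrow> (\<exists>T. similar_mat M T \<and> upper_triangular T \<and> diag_mat T = ds)"

lemma similar_upper_triangularE:
  assumes "similar_upper_triangular M ds"
  obtains T P Q where "P * Q = 1\<^sub>m (length ds)" "Q * P = 1\<^sub>m (length ds)" "M = P * T * Q"
    "M \<in> carrier_mat (length ds) (length ds)" "T \<in> carrier_mat (length ds) (length ds)"
    "P \<in> carrier_mat (length ds) (length ds)" "Q \<in> carrier_mat (length ds) (length ds)"
    "upper_triangular T" "diag_mat T = ds"
proof -
  obtain T P Q where T: "similar_mat_wit M T P Q" "upper_triangular T" "diag_mat T = ds"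
    using assms unfolding similar_upper_triangular_def similar_mat_def by blast
  have "T \<in> carrier_mat (dim_row M) (dim_row M)"
    using similar_mat_witD(5)[OF refl T(1)] .
  then have "length ds = dim_row M"
    using T(3) by (auto simp: diag_mat_def)
  from that[OF similar_mat_witD[OF this T(1)] T(2,3)] show thesis .
qed

lemma similar_upper_triangular_carrier:
  assumes "similar_upper_triangular M ds"
  shows "M \<in> carrier_mat (length ds) (length ds)"
  using similar_upper_triangularE[OF assms] by blast

lemma similar_upper_triangular_exists:
  assumes "M \<in> carrier_mat n n"
  shows "\<exists>ds. similar_upper_triangular M ds"
proof -
  obtain as where cp: "char_poly M = (\<Prod>a\<leftarrow>as. [:- a, 1:])"
    using char_poly_factorized[OF assms] by blast
  obtain T P Q where "schur_decomposition M as = (T, P, Q)"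
    by (cases "schur_decomposition M as")
  from schur_decomposition[OF assms cp this] show ?thesis
    unfolding similar_upper_triangular_def similar_mat_def by blast
qed

lemma eigvals_mset_similar_upper_triangular:
  assumes "similar_upper_triangular M ds"
  shows "eigvals_mset M = mset ds"
proof -
  obtain T P Q where C: "{M, T, P, Q} \<subseteq> carrier_mat (length ds) (length ds)"
    and T: "P * Q = 1\<^sub>m (length ds)" "Q * P = 1\<^sub>m (length ds)" "M = P * T * Q"
      "upper_triangular T" "diag_mat T = ds"
    using assms by (elim similar_upper_triangularE) simp
  have "char_poly M = char_poly T"
    using C T by (intro char_poly_similar similar_matI)
  also have "\<dots> = (\<Prod>a\<leftarrow>ds. [:- a, 1:])"
    using char_poly_upper_triangular[of T "length ds"] C T by simp
  finally have "char_poly M = (\<Prod>a\<leftarrow>ds. [:- a, 1:])" .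
  moreover have "proots (\<Prod>a\<leftarrow>ds. [:- a, 1:]) = mset ds"
  proof -
    have "0 \<notin> set (map (\<lambda>a. [:- a, 1:]) ds)" by auto
    from proots_prod_list[OF this] have "proots (\<Prod>a\<leftarrow>ds. [:- a, 1:]) = (\<Sum>a\<leftarrow>ds. {#a#})"
      by (simp add: o_def)
    also have "\<dots> = mset ds" by (induction ds) auto
    finally show ?thesis .
  qed
  ultimately show ?thesis unfolding eigvals_mset_def by simp
qed

lemma similar_upper_triangular_shift:
  assumes "similar_upper_triangular M ds"
  shows "similar_upper_triangular (M - c \<cdot>\<^sub>m 1\<^sub>m (length ds)) (map (\<lambda>x. x - c) ds)"
proof -
  let ?n = "length ds" and ?T' = "\<lambda>T. T - c \<cdot>\<^sub>m 1\<^sub>m (length ds)"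
  obtain T P Q where C: "M \<in> carrier_mat ?n ?n" "T \<in> carrier_mat ?n ?n"
      "P \<in> carrier_mat ?n ?n" "Q \<in> carrier_mat ?n ?n"
    and T: "P * Q = 1\<^sub>m ?n" "Q * P = 1\<^sub>m ?n" "M = P * T * Q" "upper_triangular T" "diag_mat T = ds"
    using assms by (elim similar_upper_triangularE)
  have "P * ?T' T * Q = (P * T - c \<cdot>\<^sub>m P) * Q"
    using C by (simp add: mult_minus_distrib_mat[OF C(3)] mult_smult_distrib[OF C(3) one_carrier_mat])
  also have "\<dots> = P * T * Q - c \<cdot>\<^sub>m (P * Q)"
    using C by (simp add: minus_mult_distrib_mat[of _ ?n ?n] mult_smult_assoc_mat)
  finally have "P * ?T' T * Q = M - c \<cdot>\<^sub>m 1\<^sub>m ?n"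
    using T(1,3) by simp
  then have "similar_mat (M - c \<cdot>\<^sub>m 1\<^sub>m ?n) (?T' T)"
    using C T by (intro similar_matI[of _ _ P Q ?n]) auto
  moreover have "upper_triangular (?T' T)"
    using T(4) C by (auto simp: upper_triangular_def)
  moreover have "diag_mat (?T' T) = map (\<lambda>x. x - c) (diag_mat T)"
    using C by (simp add: diag_mat_def)
  ultimately show ?thesis
    unfolding similar_upper_triangular_def T(5) by blast
qed

lemma similar_upper_triangular_kron_mat:
  assumes "similar_upper_triangular A as" "similar_upper_triangular B bs"
  shows "similar_upper_triangular (kron_mat A B) (kron_list as bs)"
proof -
  obtain S P Q where S: "A \<in> carrier_mat (length as) (length as)" "S \<in> carrier_mat (length as) (length as)"
    "P \<in> carrier_mat (length as) (length as)" "Q \<in> carrier_mat (length as) (length as)"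
    "P * Q = 1\<^sub>m (length as)" "Q * P = 1\<^sub>m (length as)" "A = P * S * Q"
    "upper_triangular S" "diag_mat S = as"
    using assms(1) by (elim similar_upper_triangularE)
  obtain T P' Q' where T: "B \<in> carrier_mat (length bs) (length bs)" "T \<in> carrier_mat (length bs) (length bs)"
    "P' \<in> carrier_mat (length bs) (length bs)" "Q' \<in> carrier_mat (length bs) (length bs)"
    "P' * Q' = 1\<^sub>m (length bs)" "Q' * P' = 1\<^sub>m (length bs)" "B = P' * T * Q'"
    "upper_triangular T" "diag_mat T = bs"
    using assms(2) by (elim similar_upper_triangularE)
  have "similar_mat_wit A S P Q" "similar_mat_wit B T P' Q'"
    using S T by (auto intro!: similar_mat_witI)
  then have "similar_mat (kron_mat A B) (kron_mat S T)"
    unfolding similar_mat_def by (blast intro: similar_mat_wit_kron_mat)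
  moreover have "upper_triangular (kron_mat S T)"
    using S T by (intro upper_triangular_kron_mat)
  moreover have "diag_mat (kron_mat S T) = kron_list as bs"
    using S T by (simp add: diag_mat_kron_mat)
  ultimately show ?thesis
    unfolding similar_upper_triangular_def by blast
qed

definition mat_trace :: "'a::comm_ring_1 mat \<Rightarrow> 'a" where
  "mat_trace A = (\<Sum>i<dim_row A. A $$ (i, i))"

lemma mat_trace_mult_comm:
  assumes "A \<in> carrier_mat n m" "B \<in> carrier_mat m n"
  shows "mat_trace (A * B) = mat_trace (B * A)"
proof -
  have "mat_trace (A * B) = (\<Sum>i<n. \<Sum>k<m. A $$ (i, k) * B $$ (k, i))"
    using assms by (simp add: mat_trace_def scalar_prod_def atLeast0LessThan)
  also have "\<dots> = (\<Sum>k<m. \<Sum>i<n. B $$ (k, i) * A $$ (i, k))"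
    by (subst sum.swap) (simp add: mult.commute)
  also have "\<dots> = mat_trace (B * A)"
    using assms by (simp add: mat_trace_def scalar_prod_def atLeast0LessThan)
  finally show ?thesis .
qed

lemma mat_trace_similar_upper_triangular:
  assumes "similar_upper_triangular M ds"
  shows "mat_trace M = sum_list ds"
proof -
  obtain T P Q where C: "T \<in> carrier_mat (length ds) (length ds)"
    "P \<in> carrier_mat (length ds) (length ds)" "Q \<in> carrier_mat (length ds) (length ds)"
    and T: "Q * P = 1\<^sub>m (length ds)" "M = P * T * Q" "diag_mat T = ds"
    using assms by (elim similar_upper_triangularE)
  have "mat_trace M = mat_trace (Q * (P * T))"
    unfolding T(2) by (rule mat_trace_mult_comm[OF mult_carrier_mat[OF C(2,1)] C(3)])
  also have "\<dots> = mat_trace T"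
    using C T(1) by (simp add: assoc_mult_mat[of Q _ _ P _ T, symmetric])
  also have "\<dots> = sum_list (diag_mat T)"
    using C by (simp add: mat_trace_def diag_mat_def interv_sum_list_conv_sum_set_nat atLeast0LessThan)
  finally show ?thesis
    using T(3) by simp
qed

lemma similar_upper_triangular_tensor_pow:
  assumes "similar_upper_triangular \<rho> ds"
  shows "similar_upper_triangular (tensor_pow \<rho> n) (kron_list_pow ds n)"
proof (induction n)
  case 0
  have "similar_mat (1\<^sub>m 1) (1\<^sub>m 1 :: complex mat)"
    by (rule similar_mat_refl[of _ 1]) simp
  moreover have "diag_mat (1\<^sub>m 1 :: complex mat) = [1]"
    by (simp add: diag_mat_def)
  ultimately show ?case
    unfolding similar_upper_triangular_def by (auto intro!: exI[of _ "1\<^sub>m 1"])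
qed (simp add: similar_upper_triangular_kron_mat assms)

section \<open>Entropy and distance to the uniform distribution\<close>

definition prob_list :: "real list \<Rightarrow> bool" where
  "prob_list xs \<longleftrightarrow> (\<forall>x\<in>set xs. 0 \<le> x) \<and> sum_list xs = 1"

lemma prob_list_kron_list_pow: "prob_list xs \<Longrightarrow> prob_list (kron_list_pow xs n)"
proof (induction n)
  case (Suc n)
  then show ?case
    unfolding prob_list_def by (auto simp: sum_list_kron_list dest!: set_kron_list)
qed (simp add: prob_list_def)

lemma entr_mult: "0 \<le> a \<Longrightarrow> 0 \<le> b \<Longrightarrow> entr (a * b) = a * entr b + b * entr a"
  unfolding entr_def by (auto simp: log_mult algebra_simps)

lemma sum_entr_kron_list:
  assumes "\<forall>x\<in>set xs. 0 \<le> x" "\<forall>y\<in>set ys. 0 \<le> y"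
  shows "sum_list (map entr (kron_list xs ys))
    = sum_list xs * sum_list (map entr ys) + sum_list ys * sum_list (map entr xs)"
proof -
  have "sum_list (map entr (kron_list xs ys)) = (\<Sum>x\<leftarrow>xs. \<Sum>y\<leftarrow>ys. x * entr y + y * entr x)"
    unfolding sum_list_map_kron_list using assms
    by (intro arg_cong[where f = sum_list] map_cong refl entr_mult) auto
  then show ?thesis
    by (simp add: sum_list_addf sum_list_const_mult sum_list_mult_const)
qed

lemma sum_entr_kron_list_pow:
  assumes "prob_list xs"
  shows "sum_list (map entr (kron_list_pow xs n)) = real n * sum_list (map entr xs)"
proof (induction n)
  case (Suc n)
  with prob_list_kron_list_pow[OF assms, of n] assms show ?case
    by (simp add: sum_entr_kron_list prob_list_def algebra_simps)
qed (simp add: entr_def)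

lemma sum_entr_nonpos:
  assumes "prob_list xs"
  shows "sum_list (map entr xs) \<le> 0"
proof (rule sum_list_nonpos)
  fix e assume "e \<in> set (map entr xs)"
  then obtain x where x: "x \<in> set xs" "e = entr x" by auto
  have "x \<le> sum_list xs"
    using x(1) assms by (intro member_le_sum_list) (auto simp: prob_list_def)
  then show "e \<le> 0"
    using x assms by (auto simp: prob_list_def entr_def mult_nonneg_nonpos)
qed

lemma sum_abs_diff_kron_list_le:
  fixes c d :: real
  assumes "\<forall>x\<in>set xs. 0 \<le> x" "0 \<le> d"
  shows "(\<Sum>z\<leftarrow>kron_list xs ys. \<bar>z - c * d\<bar>)
    \<le> sum_list xs * (\<Sum>y\<leftarrow>ys. \<bar>y - d\<bar>) + d * length ys * (\<Sum>x\<leftarrow>xs. \<bar>x - c\<bar>)"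
proof -
  have "(\<Sum>z\<leftarrow>kron_list xs ys. \<bar>z - c * d\<bar>) = (\<Sum>x\<leftarrow>xs. \<Sum>y\<leftarrow>ys. \<bar>x * (y - d) + d * (x - c)\<bar>)"
    unfolding sum_list_map_kron_list by (simp add: algebra_simps)
  also have "\<dots> \<le> (\<Sum>x\<leftarrow>xs. \<Sum>y\<leftarrow>ys. x * \<bar>y - d\<bar> + d * \<bar>x - c\<bar>)"
    using assms by (intro sum_list_mono abs_triangle_ineq[THEN order_trans]) (simp add: abs_mult)
  also have "\<dots> = sum_list xs * (\<Sum>y\<leftarrow>ys. \<bar>y - d\<bar>) + d * length ys * (\<Sum>x\<leftarrow>xs. \<bar>x - c\<bar>)"
    by (simp add: sum_list_addf sum_list_const_mult sum_list_mult_const sum_list_triv algebra_simps)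
  finally show ?thesis .
qed

lemma sum_abs_diff_kron_list_pow_le:
  fixes c :: real
  assumes "prob_list xs" "length xs * c = 1"
  shows "(\<Sum>z\<leftarrow>kron_list_pow xs n. \<bar>z - c ^ n\<bar>) \<le> real n * (\<Sum>x\<leftarrow>xs. \<bar>x - c\<bar>)"
proof (induction n)
  case (Suc n)
  have "c \<ge> 0"
  proof (rule ccontr)
    assume "\<not> c \<ge> 0"
    then have "length xs * c \<le> 0" by (simp add: mult_nonneg_nonpos)
    with assms(2) show False by simp
  qed
  then have "(\<Sum>z\<leftarrow>kron_list_pow xs (Suc n). \<bar>z - c ^ Suc n\<bar>)
      \<le> (\<Sum>x\<leftarrow>xs. \<bar>x - c\<bar>) + (\<Sum>z\<leftarrow>kron_list_pow xs n. \<bar>z - c ^ n\<bar>)"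
    using sum_abs_diff_kron_list_le[where xs = "kron_list_pow xs n" and ys = xs and c = "c ^ n" and d = c]
      prob_list_kron_list_pow[OF assms(1), of n] assms
    by (simp add: prob_list_def power_Suc2 mult.commute)
  with Suc show ?case
    by (simp add: algebra_simps)
qed simp

section \<open>Density matrices\<close>

lemma density_matrix_eigenvalue:
  assumes "density_matrix N \<rho>" "eigenvalue \<rho> d"
  shows "Im d = 0 \<and> 0 \<le> Re d"
proof -
  have C: "\<rho> \<in> carrier_mat N N" using assms(1) unfolding density_matrix_def by blast
  obtain v where v: "v \<in> carrier_vec N" "v \<noteq> 0\<^sub>v N" "\<rho> *\<^sub>v v = d \<cdot>\<^sub>v v"
    using assms(2) C unfolding eigenvalue_def eigenvector_def by auto
  define q where "q = (\<Sum>i<N. \<Sum>j<N. cnj (v $ i) * \<rho> $$ (i, j) * v $ j)"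
  define s where "s = (\<Sum>i<N. (cmod (v $ i))\<^sup>2)"
  have q: "Im q = 0 \<and> 0 \<le> Re q"
    using assms(1) v(1) unfolding density_matrix_def q_def Let_def by blast
  have "q = (\<Sum>i<N. cnj (v $ i) * (\<rho> *\<^sub>v v) $ i)"
    using C v(1) by (simp add: q_def scalar_prod_def atLeast0LessThan sum_distrib_left mult.assoc)
  also have "\<dots> = d * (\<Sum>i<N. cnj (v $ i) * v $ i)"
    using v(1,3) by (simp add: sum_distrib_left mult_ac)
  also have "(\<Sum>i<N. cnj (v $ i) * v $ i) = complex_of_real s"
    unfolding s_def of_real_sum complex_norm_square by (simp add: mult.commute)
  finally have qs: "q = d * complex_of_real s" .
  obtain i where i: "i < N" "v $ i \<noteq> 0"
    using v(1,2) by (metis eq_vecI carrier_vecD index_zero_vec)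
  have "0 < (cmod (v $ i))\<^sup>2" using i by simp
  also have "\<dots> \<le> s"
    unfolding s_def using i by (intro member_le_sum) auto
  finally have "0 < s" .
  with q qs show ?thesis
    by (simp add: zero_le_mult_iff)
qed

lemma density_matrix_spectrum:
  assumes "density_matrix N \<rho>"
  obtains rs where "similar_upper_triangular \<rho> (map of_real rs)" "prob_list rs" "length rs = N"
proof -
  have C: "\<rho> \<in> carrier_mat N N" using assms unfolding density_matrix_def by blast
  obtain ds where ds: "similar_upper_triangular \<rho> ds"
    using similar_upper_triangular_exists[OF C] by blast
  have nonneg_real: "Im d = 0 \<and> 0 \<le> Re d" if "d \<in> set ds" for d
  proof -
    have "d \<in># proots (char_poly \<rho>)"
      using that eigvals_mset_similar_upper_triangular[OF ds] by (simp add: eigvals_mset_def)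
    then have "eigenvalue \<rho> d"
      using eigenvalue_root_char_poly[OF C] by (cases "char_poly \<rho> = 0") auto
    with assms show ?thesis by (rule density_matrix_eigenvalue)
  qed
  then have ds_real: "ds = map of_real (map Re ds)"
    unfolding map_map by (intro map_idI[symmetric]) (auto intro: complex_eqI)
  have len: "length ds = N"
    using similar_upper_triangular_carrier[OF ds] C by auto
  have "sum_list ds = 1"
    using mat_trace_similar_upper_triangular[OF ds] assms C
    by (simp add: density_matrix_def mat_trace_def)
  then have "sum_list (map Re ds) = 1"
    by (subst (asm) ds_real) (simp only: sum_list_of_real of_real_eq_1_iff)
  with ds ds_real len nonneg_real show thesis
    by (intro that[of "map Re ds"]) (auto simp: prob_list_def)
qed

section \<open>The complexity measure in terms of the spectrum\<close>

definition qscm_of_spectrum :: "real list \<Rightarrow> real" where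
  "qscm_of_spectrum xs = (1 / log 2 (length xs)) * (- sum_list (map entr xs))
     * (1 / 2 * (\<Sum>x\<leftarrow>xs. \<bar>x - 1 / length xs\<bar>))"

lemma qscm_eq_qscm_of_spectrum:
  assumes "similar_upper_triangular M (map of_real xs)"
  shows "qscm M = qscm_of_spectrum xs"
proof -
  let ?c = "1 / of_nat (length xs) :: complex"
  have dim: "dim_row M = length xs"
    using similar_upper_triangular_carrier[OF assms] by simp
  have S: "vn_entropy M = - sum_list (map entr xs)"
    unfolding vn_entropy_def eigvals_mset_similar_upper_triangular[OF assms]
    by (simp only: mset_map[symmetric] sum_mset_sum_list map_map o_def Re_complex_of_real)
  have "eigvals_mset (M - max_mixed (length xs)) = mset (map (\<lambda>x. of_real x - ?c) xs)"
    using eigvals_mset_similar_upper_triangular[OF similar_upper_triangular_shift[OF assms, of ?c]]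
    by (simp add: max_mixed_def o_def)
  then have D: "trace_dist M (max_mixed (length xs)) = 1 / 2 * (\<Sum>x\<leftarrow>xs. \<bar>x - 1 / length xs\<bar>)"
    unfolding trace_dist_def by (simp only: mset_map[symmetric] sum_mset_sum_list map_map o_def) simp
  show ?thesis
    unfolding qscm_def qscm_of_spectrum_def dim S D ..
qed

lemma qscm_of_spectrum_kron_list_pow_le:
  assumes "prob_list xs" "length xs \<ge> 2"
  shows "qscm_of_spectrum (kron_list_pow xs n) \<le> n * qscm_of_spectrum xs"
proof (cases "n = 0")
  case False
  let ?N = "real (length xs)"
  define H D where "H = - sum_list (map entr xs)" and "D = (\<Sum>x\<leftarrow>xs. \<bar>x - 1 / ?N\<bar>)"
  have "1 < ?N"
    using assms(2) by simp
  then have "0 < log 2 ?N"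
    by (subst zero_less_log_cancel_iff) auto
  then have "0 \<le> H / log 2 ?N"
    using sum_entr_nonpos[OF assms(1)] by (simp add: H_def divide_nonpos_pos)
  moreover have "(\<Sum>z\<leftarrow>kron_list_pow xs n. \<bar>z - (1 / ?N) ^ n\<bar>) \<le> n * D"
    unfolding D_def using assms(2) by (intro sum_abs_diff_kron_list_pow_le[OF assms(1)]) auto
  ultimately have "H / log 2 ?N * (1 / 2 * (\<Sum>z\<leftarrow>kron_list_pow xs n. \<bar>z - (1 / ?N) ^ n\<bar>))
      \<le> H / log 2 ?N * (1 / 2 * (n * D))"
    by (intro mult_left_mono) simp_all
  moreover have "log 2 (?N ^ n) = n * log 2 ?N"
    by (simp add: log_nat_power)
  ultimately show ?thesis
    using False unfolding qscm_of_spectrum_def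
    by (simp add: sum_entr_kron_list_pow[OF assms(1)] power_one_over H_def D_def field_simps)
qed (simp add: qscm_of_spectrum_def)

theorem mainTheorem3:
  fixes N n :: nat and \<rho> :: "complex mat"
  assumes "N \<ge> 2" and "density_matrix N \<rho>" and "n \<ge> 1"
  shows "qscm (tensor_pow \<rho> n) \<le> real n * qscm \<rho>"
proof -
  obtain rs where rs: "similar_upper_triangular \<rho> (map of_real rs)" "prob_list rs" "length rs = N"
    using density_matrix_spectrum[OF assms(2)] by blast
  then have "similar_upper_triangular (tensor_pow \<rho> n) (map of_real (kron_list_pow rs n))"
    using similar_upper_triangular_tensor_pow by (simp add: map_of_real_kron_list_pow)
  then have "qscm (tensor_pow \<rho> n) = qscm_of_spectrum (kron_list_pow rs n)"
    by (rule qscm_eq_qscm_of_spectrum)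
  also have "\<dots> \<le> n * qscm_of_spectrum rs"
    using rs assms(1) by (intro qscm_of_spectrum_kron_list_pow_le) simp_all
  also have "\<dots> = n * qscm \<rho>"
    using qscm_eq_qscm_of_spectrum[OF rs(1)] by simp
  finally show ?thesis .
qed

end
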